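(* Let $s\in(0,1)$, $N>2s$, $1<p<\frac{N+2s}{N-2s}$, $0<a\in L^\infty(\mathbb R^N)$, and let $f\in H^{-s}(\mathbb R^N)$ be a nonnegative functional with $f\not\equiv0$. Let $C_p:=(p\|a\|_{L^\infty})^{-\frac1{p-1}}\frac{p-1}{p}$ and assume $$\inf_{u\in H^s(\mathbb R^N),\ \|u\|_{L^{p+1}(\mathbb R^N)}=1}\Big\{C_p\|u\|_{H^s}^{\frac{2p}{p-1}}-\langle f,u\rangle\Big\}>0.$$ Then $c_0<c_1$, where $c_0:=\inf_{U_1}I_{a,f}$ and $c_1:=\inf_U I_{a,f}$.
   Context: $\|u\|_{H^s}^2=\int_{\mathbb R^N}|u|^2+\iint_{\mathbb R^{2N}}\frac{|u(x)-u(y)|^2}{|x-y|^{N+2s}}dx\,dy$; $\langle\cdot,\cdot\rangle$ is the $H^{-s}$–$H^s$ duality; $f$ nonnegative means $\langle f,u\rangle\ge0$ for all nonnegative $u\in H^s$. $I_{a,f}(u)=\frac12\|u\|_{H^s}^2-\frac1{p+1}\int_{\mathbb R^N}a(x)u_+^{p+1}dx-\langle f,u\rangle$, $u_+=\max\{u,0\}$. With $g(u):=\|u\|_{H^s}^2-p\|a\|_{L^\infty}\|u\|_{L^{p+1}}^{p+1}$: $U_1:=\{u\in H^s: u=0\text{ or }g(u)>0\}$ and $U:=\{u\in H^s\setminus\{0\}: g(u)=0\}$. *)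

theory Defs
  imports "HOL-Analysis.Analysis" "HOL-Probability.Essential_Supremum"
begin

text \<open>Functions on R^N are modelled as functions on a Euclidean space 'a, N = DIM('a),
  with Lebesgue measure lborel.\<close>

definition gagliardo :: "real \<Rightarrow> ('a::euclidean_space \<Rightarrow> real) \<Rightarrow> ennreal" where
  "gagliardo s u = (\<integral>\<^sup>+ x. \<integral>\<^sup>+ y. ennreal ((u x - u y)\<^sup>2 / norm (x - y) powr (real DIM('a) + 2 * s)) \<partial>lborel \<partial>lborel)"

definition Hs :: "real \<Rightarrow> ('a::euclidean_space \<Rightarrow> real) set" where
  "Hs s = {u. u \<in> borel_measurable lborel \<and> (\<integral>\<^sup>+ x. ennreal ((u x)\<^sup>2) \<partial>lborel) < \<infinity>
             \<and> gagliardo s u < \<infinity>}"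

definition Hs_norm_sq :: "real \<Rightarrow> ('a::euclidean_space \<Rightarrow> real) \<Rightarrow> real" where
  "Hs_norm_sq s u = (\<integral> x. (u x)\<^sup>2 \<partial>lborel) + enn2real (gagliardo s u)"

definition Hs_norm :: "real \<Rightarrow> ('a::euclidean_space \<Rightarrow> real) \<Rightarrow> real" where
  "Hs_norm s u = sqrt (Hs_norm_sq s u)"

definition Lp_norm :: "real \<Rightarrow> ('a::euclidean_space \<Rightarrow> real) \<Rightarrow> real" where
  "Lp_norm q u = (\<integral> x. \<bar>u x\<bar> powr q \<partial>lborel) powr (1 / q)"

definition Linf_norm :: "('a::euclidean_space \<Rightarrow> real) \<Rightarrow> real" where
  "Linf_norm a = real_of_ereal (esssup lborel (\<lambda>x. ereal \<bar>a x\<bar>))"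

definition dual_Hs :: "real \<Rightarrow> (('a::euclidean_space \<Rightarrow> real) \<Rightarrow> real) \<Rightarrow> bool" where
  "dual_Hs s f \<longleftrightarrow>
     (\<forall>u\<in>Hs s. \<forall>v\<in>Hs s. f (\<lambda>x. u x + v x) = f u + f v) \<and>
     (\<forall>u\<in>Hs s. \<forall>c::real. f (\<lambda>x. c * u x) = c * f u) \<and>
     (\<exists>C. \<forall>u\<in>Hs s. \<bar>f u\<bar> \<le> C * Hs_norm s u)"

definition nonneg_functional :: "real \<Rightarrow> (('a::euclidean_space \<Rightarrow> real) \<Rightarrow> real) \<Rightarrow> bool" where
  "nonneg_functional s f \<longleftrightarrow> (\<forall>u\<in>Hs s. (AE x in lborel. u x \<ge> 0) \<longrightarrow> f u \<ge> 0)"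

definition I_af :: "real \<Rightarrow> real \<Rightarrow> ('a::euclidean_space \<Rightarrow> real) \<Rightarrow> (('a \<Rightarrow> real) \<Rightarrow> real)
                     \<Rightarrow> ('a \<Rightarrow> real) \<Rightarrow> real" where
  "I_af s p a f u = Hs_norm_sq s u / 2
     - (1 / (p + 1)) * (\<integral> x. a x * (max (u x) 0) powr (p + 1) \<partial>lborel) - f u"

definition g_fun :: "real \<Rightarrow> real \<Rightarrow> ('a::euclidean_space \<Rightarrow> real) \<Rightarrow> ('a \<Rightarrow> real) \<Rightarrow> real" where
  "g_fun s p a u = Hs_norm_sq s u - p * Linf_norm a * Lp_norm (p + 1) u powr (p + 1)"

text \<open>u = 0 in H^s means u vanishes almost everywhere.\<close>
definition U1_set :: "real \<Rightarrow> real \<Rightarrow> ('a::euclidean_space \<Rightarrow> real) \<Rightarrow> ('a \<Rightarrow> real) set" where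
  "U1_set s p a = {u \<in> Hs s. (AE x in lborel. u x = 0) \<or> g_fun s p a u > 0}"

definition U_set :: "real \<Rightarrow> real \<Rightarrow> ('a::euclidean_space \<Rightarrow> real) \<Rightarrow> ('a \<Rightarrow> real) set" where
  "U_set s p a = {u \<in> Hs s. \<not> (AE x in lborel. u x = 0) \<and> g_fun s p a u = 0}"

end

theory Submission
  imports Defs
begin

text \<open>
  Write \<open>A = \<parallel>u\<parallel>\<^sup>2\<close>, \<open>\<rho> = \<parallel>u\<parallel>\<^sub>p\<^sub>+\<^sub>1\<close>, \<open>B = \<integral> a u\<^sub>+\<^bsup>p+1\<^esup>\<close> and \<open>F = f u\<close>, so that
  \<open>I(t u) = t\<^sup>2 A / 2 - t\<^bsup>p+1\<^esup> B / (p + 1) - t F\<close> for \<open>t \<ge> 0\<close>. On \<open>U\<close> we have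
  \<open>A = p \<parallel>a\<parallel>\<^sub>\<infinity> \<rho>\<^bsup>p+1\<^esup>\<close>, hence \<open>B \<le> A / p\<close> and \<open>t u \<in> U\<^sub>1\<close> for \<open>0 < t < 1\<close>.
  The hypothesis applied to \<open>u / \<rho>\<close> gives \<open>\<delta> \<rho> < D := (p - 1) / p A - F\<close> for a
  fixed \<open>\<delta> > 0\<close>. By Bernoulli's inequality \<open>I(u) - I((1 - h) u) \<ge> h D - A h\<^sup>2 / 2\<close>, and
  \<open>h = D / A\<close> gains \<open>D\<^sup>2 / (2 A) \<ge> \<delta>\<^sup>2 \<rho>\<^sup>2 / (2 A)\<close>; this is bounded below uniformly on
  \<open>{u \<in> U. I(u) < 0}\<close> because \<open>A\<close> is bounded there by coercivity of \<open>I\<close> on \<open>U\<close>. Where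
  \<open>I(u) \<ge> 0\<close> one compares instead with a small multiple of some \<open>v\<close> with \<open>f v > 0\<close>,
  which lies in \<open>U\<^sub>1\<close> and has negative energy. So every value of \<open>I\<close> on \<open>U\<close> exceeds a
  value on \<open>U\<^sub>1\<close> by a fixed positive amount; as \<open>I\<close> is also bounded below on \<open>U\<close>, the
  infimum \<open>c\<^sub>1\<close> is finite and exceeds \<open>c\<^sub>0\<close>.
\<close>

definition fibering_map :: "real \<Rightarrow> real \<Rightarrow> real \<Rightarrow> real \<Rightarrow> real \<Rightarrow> real" where
  "fibering_map p A B F t = t\<^sup>2 * A / 2 - t powr (p + 1) * B / (p + 1) - t * F"

lemma powr_Bernoulli_inequality:
  fixes q h :: real
  assumes "1 \<le> q" "0 \<le> h" "h \<le> 1"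
  shows "1 - q * h \<le> (1 - h) powr q"
proof (cases "h = 1")
  case True
  then show ?thesis
    using assms by simp
next
  case False
  then have "0 < 1 - h"
    using assms by simp
  have "((\<lambda>x. x powr q) has_field_derivative q * 1 powr (q - 1)) (at 1 within {0<..})"
    by (rule has_field_derivative_at_within) (rule has_real_derivative_powr, simp)
  then have "q * 1 powr (q - 1) * ((1 - h) - 1) \<le> (1 - h) powr q - 1 powr q"
    by (intro convex_on_imp_above_tangent[OF powr_convex[OF assms(1)]])
       (use \<open>0 < 1 - h\<close> in \<open>auto simp: convex_connected interior_open\<close>)
  then show ?thesis
    by (simp add: algebra_simps)
qed

lemma powr_plus_1_eq:
  fixes x q :: real
  assumes "0 \<le> x"
  shows "x powr (q + 1) = x powr (q - 1) * x\<^sup>2"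
proof -
  have "x powr (q + 1) = x powr ((q - 1) + 2)"
    by (simp add: add.commute)
  also have "\<dots> = x powr (q - 1) * x powr 2"
    by (rule powr_add)
  finally show ?thesis
    using assms by simp
qed

lemma fibering_map_zero [simp]: "fibering_map p A B F 0 = 0"
  by (simp add: fibering_map_def)

lemma fibering_map_gain:
  fixes p h A B F :: real
  assumes "1 < p" "0 \<le> h" "h \<le> 1" "0 \<le> B" "B \<le> A / p"
  shows "h * ((p - 1) / p * A - F) - A * h\<^sup>2 / 2
           \<le> fibering_map p A B F 1 - fibering_map p A B F (1 - h)"
proof -
  have "1 - (p + 1) * h \<le> (1 - h) powr (p + 1)"
    using powr_Bernoulli_inequality[of "p + 1" h] assms by simp
  then have "B * (1 - (1 - h) powr (p + 1)) \<le> B * ((p + 1) * h)"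
    using assms by (intro mult_left_mono) auto
  then have "B * (1 - (1 - h) powr (p + 1)) / (p + 1) \<le> h * B"
    using assms by (simp add: divide_le_eq mult.commute mult.left_commute)
  moreover have "h * B \<le> h * (A / p)"
    using assms by (intro mult_left_mono) auto
  moreover have "fibering_map p A B F 1 - fibering_map p A B F (1 - h)
      = A * h - A * h\<^sup>2 / 2 - B * (1 - (1 - h) powr (p + 1)) / (p + 1) - h * F"
    by (simp add: fibering_map_def power2_eq_square algebra_simps diff_divide_distrib add_divide_distrib)
  moreover have "h * ((p - 1) / p * A - F) = A * h - h * (A / p) - h * F"
    using assms by (simp add: field_simps)
  ultimately show ?thesis
    by linarith
qed

lemma fibering_map_coercive:
  fixes p A B F K :: real
  assumes "1 < p" "0 \<le> A" "0 \<le> B" "B \<le> A / p" "F \<le> K * sqrt A"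
  shows "(1 / 2 - 1 / (p * (p + 1))) * A - K * sqrt A \<le> fibering_map p A B F 1"
proof -
  have "B / (p + 1) \<le> A / p / (p + 1)"
    using assms by (intro divide_right_mono) auto
  also have "\<dots> = A * (1 / (p * (p + 1)))"
    by simp
  finally have "B / (p + 1) \<le> A * (1 / (p * (p + 1)))" .
  moreover have "fibering_map p A B F 1 = A / 2 - B / (p + 1) - F"
    by (simp add: fibering_map_def)
  moreover have "(1 / 2 - 1 / (p * (p + 1))) * A = A / 2 - A * (1 / (p * (p + 1)))"
    by (simp add: algebra_simps)
  ultimately show ?thesis
    using assms(5) by linarith
qed

lemma quadratic_ge_neg_discriminant:
  fixes \<alpha> K x :: real
  assumes "0 < \<alpha>"
  shows "- (K\<^sup>2 / (4 * \<alpha>)) \<le> \<alpha> * x\<^sup>2 - K * x"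
proof -
  have "\<alpha> * x\<^sup>2 - K * x + K\<^sup>2 / (4 * \<alpha>) = (2 * \<alpha> * x - K)\<^sup>2 / (4 * \<alpha>)"
    using assms by (simp add: field_simps power2_eq_square)
  moreover have "0 \<le> (2 * \<alpha> * x - K)\<^sup>2 / (4 * \<alpha>)"
    using assms by simp
  ultimately show ?thesis
    by linarith
qed

lemma Nehari_gain_lower_bound:
  fixes p L \<rho> A \<delta> D A\<^sub>0 :: real
  assumes p: "1 < p" and L: "0 < L" and \<rho>: "0 < \<rho>" and A: "A = p * L * \<rho> powr (p + 1)"
    and A_le: "A \<le> A\<^sub>0" and \<delta>: "0 \<le> \<delta>" "\<delta> * \<rho> \<le> D"
  shows "\<delta>\<^sup>2 / (2 * max (p * L) A\<^sub>0) \<le> D\<^sup>2 / (2 * A)"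
proof -
  have "p * L * \<rho> powr (p - 1) \<le> max (p * L) A"
  proof (cases "\<rho> \<le> 1")
    case True
    then have "\<rho> powr (p - 1) \<le> 1"
      using \<rho> p by (intro powr_le1) auto
    then have "p * L * \<rho> powr (p - 1) \<le> p * L"
      using p L by (intro mult_left_le) auto
    then show ?thesis
      by (rule order_trans[OF _ max.cobounded1])
  next
    case False
    then have "\<rho> powr (p - 1) \<le> \<rho> powr (p + 1)"
      by (intro powr_mono) auto
    then have "p * L * \<rho> powr (p - 1) \<le> A"
      using p L by (simp add: A)
    then show ?thesis
      by (rule order_trans[OF _ max.cobounded2])
  qed
  then have M: "p * L * \<rho> powr (p - 1) \<le> max (p * L) A\<^sub>0"
    using A_le by linarith
  have "(\<delta> * \<rho>)\<^sup>2 \<le> D\<^sup>2"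
    using \<delta> \<rho> by (intro power_mono) auto
  have "A * \<delta>\<^sup>2 = (p * L * \<rho> powr (p - 1)) * (\<delta> * \<rho>)\<^sup>2"
    using \<rho> by (simp add: A powr_plus_1_eq power_mult_distrib)
  also have "\<dots> \<le> max (p * L) A\<^sub>0 * D\<^sup>2"
    using M \<open>(\<delta> * \<rho>)\<^sup>2 \<le> D\<^sup>2\<close> p L \<rho> by (intro mult_mono) (auto simp: le_max_iff_disj)
  finally have "A * \<delta>\<^sup>2 \<le> max (p * L) A\<^sub>0 * D\<^sup>2" .
  moreover have "0 < max (p * L) A\<^sub>0"
    using p L by (simp add: less_max_iff_disj)
  moreover have "0 < A"
    using A p L \<rho> by simp
  ultimately show ?thesis
    by (simp add: frac_le_eq divide_le_eq le_divide_eq mult.commute)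
qed

lemma fibering_map_gap:
  fixes p L \<rho> A B F \<delta> A\<^sub>0 :: real
  assumes p: "1 < p" and L: "0 < L" and \<rho>: "0 < \<rho>" and A: "A = p * L * \<rho> powr (p + 1)"
    and B: "0 \<le> B" "B \<le> A / p" and \<delta>: "0 \<le> \<delta>" "\<delta> * \<rho> < (p - 1) / p * A - F"
    and A_le: "A \<le> A\<^sub>0" and neg: "fibering_map p A B F 1 < 0"
  shows "\<exists>h. 0 < h \<and> h < 1 \<and>
    fibering_map p A B F (1 - h) + \<delta>\<^sup>2 / (2 * max (p * L) A\<^sub>0) \<le> fibering_map p A B F 1"
proof -
  define D where "D = (p - 1) / p * A - F"
  have A_pos: "0 < A"
    using A p L \<rho> by simp
  have "0 \<le> \<delta> * \<rho>"
    using \<delta> \<rho> by simp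
  then have D_pos: "0 < D"
    using \<delta>(2) unfolding D_def by linarith
  have "D - A / 2 \<le> fibering_map p A B F 1"
    using fibering_map_gain[of p 1 B A F] p B by (simp add: D_def)
  then have "D < A"
    using neg A_pos by linarith
  define h where "h = D / A"
  have h: "0 < h" "h < 1"
    using D_pos A_pos \<open>D < A\<close> by (auto simp: h_def)
  have "h * D - A * h\<^sup>2 / 2 = D\<^sup>2 / (2 * A)"
    using A_pos by (simp add: h_def field_simps power2_eq_square)
  then have "D\<^sup>2 / (2 * A) \<le> fibering_map p A B F 1 - fibering_map p A B F (1 - h)"
    using fibering_map_gain[of p h B A F] p B h unfolding D_def by simp
  moreover have "\<delta>\<^sup>2 / (2 * max (p * L) A\<^sub>0) \<le> D\<^sup>2 / (2 * A)"
    using \<delta>(2) by (intro Nehari_gain_lower_bound[OF p L \<rho> A A_le \<delta>(1)]) (simp add: D_def)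
  ultimately show ?thesis
    using h by (intro exI[of _ h]) auto
qed

lemma gagliardo_cmult:
  fixes u :: "'a::euclidean_space \<Rightarrow> real"
  assumes [measurable]: "u \<in> borel_measurable lborel"
  shows "gagliardo s (\<lambda>x. c * u x) = ennreal (c\<^sup>2) * gagliardo s u"
proof -
  have "ennreal ((c * u x - c * u y)\<^sup>2 / norm (x - y) powr (real DIM('a) + 2 * s))
      = ennreal (c\<^sup>2) * ennreal ((u x - u y)\<^sup>2 / norm (x - y) powr (real DIM('a) + 2 * s))" for x y
  proof -
    have "(c * u x - c * u y)\<^sup>2 = c\<^sup>2 * (u x - u y)\<^sup>2"
      by (simp add: power2_eq_square algebra_simps)
    then show ?thesis
      by (simp add: ennreal_mult[symmetric])
  qed
  then show ?thesis
    unfolding gagliardo_def by (simp add: nn_integral_cmult)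
qed

lemma Hs_cmult:
  assumes "u \<in> Hs s"
  shows "(\<lambda>x. c * u x) \<in> Hs s"
proof -
  have [measurable]: "u \<in> borel_measurable lborel"
    using assms by (simp add: Hs_def)
  have "(\<integral>\<^sup>+ x. ennreal ((c * u x)\<^sup>2) \<partial>lborel) = ennreal (c\<^sup>2) * (\<integral>\<^sup>+ x. ennreal ((u x)\<^sup>2) \<partial>lborel)"
    by (subst nn_integral_cmult[symmetric]) (auto simp: power_mult_distrib ennreal_mult)
  then show ?thesis
    using assms by (simp add: Hs_def gagliardo_cmult ennreal_mult_less_top)
qed

lemma Hs_norm_sq_cmult:
  assumes "u \<in> Hs s"
  shows "Hs_norm_sq s (\<lambda>x. c * u x) = c\<^sup>2 * Hs_norm_sq s u"
proof -
  have [measurable]: "u \<in> borel_measurable lborel"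
    using assms by (simp add: Hs_def)
  show ?thesis
    by (simp add: Hs_norm_sq_def gagliardo_cmult enn2real_mult power_mult_distrib algebra_simps)
qed

lemma Hs_norm_sq_nonneg: "0 \<le> Hs_norm_sq s u"
  unfolding Hs_norm_sq_def by (intro add_nonneg_nonneg integral_nonneg) auto

lemma Hs_norm_sq_pos:
  assumes "u \<in> Hs s" "\<not> (AE x in lborel. u x = 0)"
  shows "0 < Hs_norm_sq s u"
proof -
  have [measurable]: "u \<in> borel_measurable lborel"
    and "(\<integral>\<^sup>+ x. ennreal ((u x)\<^sup>2) \<partial>lborel) < \<infinity>"
    using assms by (auto simp: Hs_def)
  then have int: "integrable lborel (\<lambda>x. (u x)\<^sup>2)"
    by (intro integrableI_bounded) auto
  have "(\<integral>x. (u x)\<^sup>2 \<partial>lborel) \<noteq> 0"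
    using integral_nonneg_eq_0_iff_AE[OF int] assms(2) by auto
  moreover have "0 \<le> (\<integral>x. (u x)\<^sup>2 \<partial>lborel)"
    by simp
  ultimately have "0 < (\<integral>x. (u x)\<^sup>2 \<partial>lborel)"
    by linarith
  then show ?thesis
    unfolding Hs_norm_sq_def by (intro add_pos_nonneg) auto
qed

lemma Lp_norm_nonneg: "0 \<le> Lp_norm q u"
  unfolding Lp_norm_def by simp

lemma Lp_norm_cmult:
  assumes "0 < q"
  shows "Lp_norm q (\<lambda>x. c * u x) = \<bar>c\<bar> * Lp_norm q u"
proof -
  have "(\<integral>x. \<bar>c * u x\<bar> powr q \<partial>lborel) = \<bar>c\<bar> powr q * (\<integral>x. \<bar>u x\<bar> powr q \<partial>lborel)"
    by (simp add: abs_mult powr_mult)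
  then show ?thesis
    using assms by (simp add: Lp_norm_def powr_mult powr_powr)
qed

lemma g_fun_cmult:
  assumes "u \<in> Hs s" "0 < t" "0 < p"
  shows "g_fun s p a (\<lambda>x. t * u x)
           = t\<^sup>2 * (Hs_norm_sq s u - t powr (p - 1) * (p * Linf_norm a * Lp_norm (p + 1) u powr (p + 1)))"
proof -
  have "Lp_norm (p + 1) (\<lambda>x. t * u x) powr (p + 1) = t powr (p - 1) * t\<^sup>2 * Lp_norm (p + 1) u powr (p + 1)"
    using assms by (simp add: Lp_norm_cmult powr_mult Lp_norm_nonneg powr_plus_1_eq[of t p])
  then show ?thesis
    using assms by (simp add: g_fun_def Hs_norm_sq_cmult algebra_simps)
qed

lemma dual_Hs_cmult:
  assumes "dual_Hs s f" "u \<in> Hs s"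
  shows "f (\<lambda>x. c * u x) = c * f u"
  using assms by (simp add: dual_Hs_def)

lemma Linf_norm_bound_AE:
  fixes a :: "'a::euclidean_space \<Rightarrow> real"
  assumes [measurable]: "a \<in> borel_measurable lborel"
    and "\<exists>C. AE x in lborel. \<bar>a x\<bar> \<le> C"
  shows "AE x in lborel. \<bar>a x\<bar> \<le> Linf_norm a"
proof -
  obtain C where "AE x in lborel. \<bar>a x\<bar> \<le> C"
    using assms(2) by auto
  then have "esssup lborel (\<lambda>x. ereal \<bar>a x\<bar>) \<le> ereal C"
    by (intro esssup_I) auto
  with esssup_AE[of "\<lambda>x. ereal \<bar>a x\<bar>" lborel] show ?thesis
    unfolding Linf_norm_def
    by (cases "esssup lborel (\<lambda>x. ereal \<bar>a x\<bar>)") (auto elim: eventually_mono)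
qed

lemma Linf_norm_pos:
  fixes a :: "'a::euclidean_space \<Rightarrow> real"
  assumes "a \<in> borel_measurable lborel" "\<exists>C. AE x in lborel. \<bar>a x\<bar> \<le> C"
    and "AE x in lborel. 0 < a x"
  shows "0 < Linf_norm a"
proof (rule ccontr)
  assume "\<not> 0 < Linf_norm a"
  have "AE x in lborel. a x \<le> 0 \<and> 0 < a x"
    using Linf_norm_bound_AE[OF assms(1,2)] assms(3)
    by eventually_elim (use \<open>\<not> 0 < Linf_norm a\<close> in auto)
  then have "AE x::'a in lborel. False"
    by (rule eventually_mono) auto
  then show False
    using ae_filter_eq_bot_iff[of "lborel :: 'a measure"] by (simp add: trivial_limit_def[symmetric])
qed

lemma INF_ereal_pos_imp_uniform:
  fixes h :: "'b \<Rightarrow> real"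
  assumes "0 < (INF x\<in>S. ereal (h x))"
  shows "\<exists>\<delta>>0. \<forall>x\<in>S. \<delta> < h x"
proof -
  obtain z where z: "0 < ereal z" "ereal z < (INF x\<in>S. ereal (h x))"
    using ereal_dense2[OF assms] by blast
  have "ereal z < ereal (h x)" if "x \<in> S" for x
    using z(2) INF_lower[OF that, of "\<lambda>x. ereal (h x)"] by (rule order.strict_trans2)
  then show ?thesis
    using z(1) by auto
qed

lemma INF_less_INF_if_uniform_gap:
  fixes g :: "'b \<Rightarrow> real"
  assumes "V \<noteq> {}" "0 < m" "\<And>u. u \<in> U \<Longrightarrow> M \<le> g u"
    and gap: "\<And>u. u \<in> U \<Longrightarrow> \<exists>v\<in>V. g v + m \<le> g u"
  shows "(INF v\<in>V. ereal (g v)) < (INF u\<in>U. ereal (g u))"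
proof (cases "U = {}")
  case True
  obtain v where "v \<in> V"
    using assms(1) by blast
  then have "(INF v\<in>V. ereal (g v)) \<le> ereal (g v)"
    by (rule INF_lower)
  also have "\<dots> < top"
    by (simp add: top_ereal_def)
  finally show ?thesis
    using True by simp
next
  case False
  define c\<^sub>0 where "c\<^sub>0 = (INF v\<in>V. ereal (g v))"
  define c\<^sub>1 where "c\<^sub>1 = (INF u\<in>U. ereal (g u))"
  have "c\<^sub>0 + ereal m \<le> ereal (g u)" if u: "u \<in> U" for u
  proof -
    obtain v where "v \<in> V" "g v + m \<le> g u"
      using gap[OF u] by blast
    then have "c\<^sub>0 + ereal m \<le> ereal (g v) + ereal m"
      unfolding c\<^sub>0_def by (intro add_right_mono INF_lower)
    with \<open>g v + m \<le> g u\<close> show ?thesis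
      by (simp add: order_trans)
  qed
  then have gap_c: "c\<^sub>0 + ereal m \<le> c\<^sub>1"
    unfolding c\<^sub>1_def by (rule INF_greatest)
  obtain u where "u \<in> U"
    using False by blast
  have "ereal M \<le> c\<^sub>1" "c\<^sub>1 \<le> ereal (g u)"
    using assms(3) \<open>u \<in> U\<close> unfolding c\<^sub>1_def by (auto intro: INF_greatest INF_lower)
  then obtain r where r: "c\<^sub>1 = ereal r"
    by (cases c\<^sub>1) auto
  have "c\<^sub>0 < c\<^sub>1"
    using gap_c \<open>0 < m\<close> unfolding r by (cases c\<^sub>0) auto
  then show ?thesis
    unfolding c\<^sub>0_def c\<^sub>1_def .
qed

locale fractional_problem =
  fixes s p :: real and a :: "'a::euclidean_space \<Rightarrow> real"
    and f :: "('a \<Rightarrow> real) \<Rightarrow> real" and K :: real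
  assumes p_gt_1: "1 < p"
    and a_measurable [measurable]: "a \<in> borel_measurable lborel"
    and a_bounded: "\<exists>C. AE x in lborel. \<bar>a x\<bar> \<le> C"
    and a_pos: "AE x in lborel. 0 < a x"
    and f_dual: "dual_Hs s f"
    and f_bounded: "\<And>u. u \<in> Hs s \<Longrightarrow> \<bar>f u\<bar> \<le> K * Hs_norm s u"
begin

definition nonlinear_term :: "('a \<Rightarrow> real) \<Rightarrow> real" where
  "nonlinear_term u = (\<integral> x. a x * max (u x) 0 powr (p + 1) \<partial>lborel)"

definition Cp :: real where
  "Cp = (p * Linf_norm a) powr (- 1 / (p - 1)) * ((p - 1) / p)"

definition coercivity :: real where
  "coercivity = 1 / 2 - 1 / (p * (p + 1))"

lemma coercivity_pos: "0 < coercivity"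
proof -
  have "2 < p * (p + 1)"
    using p_gt_1 mult_strict_mono[of 1 p 2 "p + 1"] by simp
  then show ?thesis
    by (simp add: coercivity_def field_simps)
qed

lemma L_pos: "0 < Linf_norm a"
  using Linf_norm_pos[OF a_measurable a_bounded a_pos] .

lemma nonlinear_term_nonneg: "0 \<le> nonlinear_term u"
  unfolding nonlinear_term_def
  by (rule integral_nonneg_AE) (use a_pos in \<open>auto elim!: eventually_mono\<close>)

text \<open>A positive Lebesgue norm certifies integrability of \<open>\<bar>u\<bar> powr (p + 1)\<close>, since the
  Bochner integral of a non-integrable function is \<open>0\<close>.\<close>
lemma nonlinear_term_le:
  assumes "0 < Lp_norm (p + 1) u"
  shows "nonlinear_term u \<le> Linf_norm a * Lp_norm (p + 1) u powr (p + 1)"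
proof -
  have int: "integrable lborel (\<lambda>x. \<bar>u x\<bar> powr (p + 1))"
    using assms not_integrable_integral_eq unfolding Lp_norm_def by fastforce
  have "nonlinear_term u \<le> (\<integral>x. Linf_norm a * \<bar>u x\<bar> powr (p + 1) \<partial>lborel)"
    unfolding nonlinear_term_def
  proof (rule integral_mono_AE')
    show "integrable lborel (\<lambda>x. Linf_norm a * \<bar>u x\<bar> powr (p + 1))"
      using int by simp
    show "AE x in lborel. 0 \<le> Linf_norm a * \<bar>u x\<bar> powr (p + 1)"
      using L_pos by simp
    show "AE x in lborel. a x * max (u x) 0 powr (p + 1) \<le> Linf_norm a * \<bar>u x\<bar> powr (p + 1)"
      using Linf_norm_bound_AE[OF a_measurable a_bounded] a_pos
    proof eventually_elim
      case (elim x)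
      have "max (u x) 0 powr (p + 1) \<le> \<bar>u x\<bar> powr (p + 1)"
        using p_gt_1 by (intro powr_mono2) auto
      with elim show ?case
        by (intro mult_mono) auto
    qed
  qed
  also have "\<dots> = Linf_norm a * Lp_norm (p + 1) u powr (p + 1)"
    using p_gt_1 by (simp add: Lp_norm_def powr_powr)
  finally show ?thesis .
qed

lemma nonlinear_term_cmult:
  assumes "0 \<le> t"
  shows "nonlinear_term (\<lambda>x. t * u x) = t powr (p + 1) * nonlinear_term u"
proof -
  have "a x * max (t * u x) 0 powr (p + 1) = t powr (p + 1) * (a x * max (u x) 0 powr (p + 1))" for x
  proof -
    have "max (t * u x) 0 = t * max (u x) 0"
      using assms by (simp add: max_mult_distrib_left)
    then show ?thesis
      using assms by (simp add: powr_mult)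
  qed
  then show ?thesis
    unfolding nonlinear_term_def by (simp only: integral_mult_right_zero)
qed

lemma I_af_cmult:
  assumes "u \<in> Hs s" "0 \<le> t"
  shows "I_af s p a f (\<lambda>x. t * u x) = fibering_map p (Hs_norm_sq s u) (nonlinear_term u) (f u) t"
  using assms
  by (simp add: I_af_def nonlinear_term_def[symmetric] nonlinear_term_cmult fibering_map_def
      Hs_norm_sq_cmult dual_Hs_cmult[OF f_dual])

lemma I_af_eq_fibering_map:
  assumes "u \<in> Hs s"
  shows "I_af s p a f u = fibering_map p (Hs_norm_sq s u) (nonlinear_term u) (f u) 1"
  using I_af_cmult[OF assms, of 1] by simp

lemma U_set_cmult_mem_U1_set:
  assumes "u \<in> U_set s p a" "0 < t" "t < 1"
  shows "(\<lambda>x. t * u x) \<in> U1_set s p a"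
proof -
  have u: "u \<in> Hs s" "\<not> (AE x in lborel. u x = 0)"
    and "p * Linf_norm a * Lp_norm (p + 1) u powr (p + 1) = Hs_norm_sq s u"
    using assms(1) by (auto simp: U_set_def g_fun_def)
  moreover have "0 < Hs_norm_sq s u"
    using Hs_norm_sq_pos[OF u] .
  moreover have "t powr (p - 1) < 1"
    using assms(2,3) p_gt_1 powr_less_mono2[of "p - 1" t 1] by simp
  ultimately have "0 < g_fun s p a (\<lambda>x. t * u x)"
    using assms(2) p_gt_1 by (simp add: g_fun_cmult)
  then show ?thesis
    using Hs_cmult[OF u(1)] by (simp add: U1_set_def)
qed

lemma eventually_cmult_mem_U1_set:
  assumes u: "u \<in> Hs s" and A: "0 < Hs_norm_sq s u"
  shows "eventually (\<lambda>t. (\<lambda>x. t * u x) \<in> U1_set s p a) (at_right 0)"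
proof -
  define R where "R = p * Linf_norm a * Lp_norm (p + 1) u powr (p + 1)"
  have "((\<lambda>t. t powr (p - 1) * R) \<longlongrightarrow> 0 powr (p - 1) * R) (at_right 0)"
    using p_gt_1 eventually_at_right_less[of "0 :: real"]
    by (intro tendsto_intros) (auto elim: eventually_mono)
  then have "eventually (\<lambda>t. t powr (p - 1) * R < Hs_norm_sq s u) (at_right 0)"
    using p_gt_1 A by (intro order_tendstoD(2)) auto
  then show ?thesis
    using eventually_at_right_less[of "0 :: real"]
  proof eventually_elim
    case (elim t)
    then have "0 < g_fun s p a (\<lambda>x. t * u x)"
      using p_gt_1 by (simp add: g_fun_cmult[OF u] R_def)
    then show ?case
      using Hs_cmult[OF u] by (simp add: U1_set_def)
  qed
qed

lemma eventually_I_af_cmult_neg: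
  assumes u: "u \<in> Hs s" and F: "0 < f u"
  shows "eventually (\<lambda>t. I_af s p a f (\<lambda>x. t * u x) < 0) (at_right 0)"
proof -
  define A where "A = Hs_norm_sq s u"
  have "eventually (\<lambda>t. t * A / 2 < f u) (at_right 0)"
    using F by (intro order_tendstoD(2)) (auto intro!: tendsto_eq_intros)
  then show ?thesis
    using eventually_at_right_less[of "0 :: real"]
  proof eventually_elim
    case (elim t)
    have "I_af s p a f (\<lambda>x. t * u x) = t * (t * A / 2 - f u) - t powr (p + 1) * nonlinear_term u / (p + 1)"
      using elim by (simp add: I_af_cmult[OF u] fibering_map_def A_def power2_eq_square algebra_simps)
    moreover have "0 \<le> t powr (p + 1) * nonlinear_term u / (p + 1)"
      using p_gt_1 nonlinear_term_nonneg[of u] by simp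
    moreover have "t * (t * A / 2 - f u) < 0"
      using elim by (simp add: mult_pos_neg)
    ultimately show ?case
      by linarith
  qed
qed

lemma exists_U1_set_negative_energy:
  assumes "\<exists>u\<in>Hs s. f u \<noteq> 0"
  shows "\<exists>v\<in>U1_set s p a. I_af s p a f v < 0"
proof -
  obtain u where u: "u \<in> Hs s" "f u \<noteq> 0"
    using assms by blast
  define v where "v = (if 0 < f u then u else (\<lambda>x. (- 1) * u x))"
  have v: "v \<in> Hs s" "0 < f v"
    using u Hs_cmult[OF u(1), of "- 1"] dual_Hs_cmult[OF f_dual u(1), of "- 1"] by (auto simp: v_def)
  have "0 < Hs_norm_sq s v"
    using f_bounded[OF v(1)] v(2) Hs_norm_sq_nonneg[of s v] by (auto simp: Hs_norm_def less_le)
  then have "eventually (\<lambda>t. (\<lambda>x. t * v x) \<in> U1_set s p a \<and> I_af s p a f (\<lambda>x. t * v x) < 0)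
      (at_right 0)"
    using eventually_cmult_mem_U1_set[OF v(1)] eventually_I_af_cmult_neg[OF v] eventually_conj
    by blast
  then show ?thesis
    using eventually_happens'[OF trivial_limit_at_right_real] by blast
qed

lemma U_set_D:
  assumes "u \<in> U_set s p a"
  shows "u \<in> Hs s" and "0 < Hs_norm_sq s u" and "0 < Lp_norm (p + 1) u"
    and "Hs_norm_sq s u = p * Linf_norm a * Lp_norm (p + 1) u powr (p + 1)"
    and "nonlinear_term u \<le> Hs_norm_sq s u / p"
proof -
  show u: "u \<in> Hs s"
    using assms by (simp add: U_set_def)
  show A: "0 < Hs_norm_sq s u"
    using assms by (intro Hs_norm_sq_pos) (auto simp: U_set_def)
  show eq: "Hs_norm_sq s u = p * Linf_norm a * Lp_norm (p + 1) u powr (p + 1)"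
    using assms by (simp add: U_set_def g_fun_def)
  show \<rho>: "0 < Lp_norm (p + 1) u"
    using A eq Lp_norm_nonneg[of "p + 1" u] by (cases "Lp_norm (p + 1) u = 0") auto
  show "nonlinear_term u \<le> Hs_norm_sq s u / p"
    using nonlinear_term_le[OF \<rho>] eq p_gt_1 by (simp add: field_simps)
qed

lemma Cp_rescaled_norm:
  assumes "0 < \<rho>" "A = p * Linf_norm a * \<rho> powr (p + 1)"
  shows "Cp * (sqrt A / \<rho>) powr (2 * p / (p - 1)) = (p - 1) / p * A / \<rho>"
proof -
  define P where "P = p * Linf_norm a"
  have P: "0 < P"
    using p_gt_1 L_pos by (simp add: P_def)
  have "A = P * \<rho> powr (p - 1) * \<rho>\<^sup>2"
    using assms by (simp add: P_def powr_plus_1_eq)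
  then have "sqrt A / \<rho> = (P * \<rho> powr (p - 1)) powr (1 / 2)"
    using assms P by (simp add: real_sqrt_mult powr_half_sqrt)
  then have X: "(sqrt A / \<rho>) powr (2 * p / (p - 1)) = P powr (p / (p - 1)) * \<rho> powr p"
    using assms P p_gt_1 by (simp add: powr_powr powr_mult)
  have P_powr: "P powr (- 1 / (p - 1)) * P powr (p / (p - 1)) = P"
  proof -
    have "- 1 / (p - 1) + p / (p - 1) = 1"
      using p_gt_1 by (simp add: diff_divide_distrib[symmetric])
    then show ?thesis
      using P by (simp flip: powr_add)
  qed
  have "Cp * (sqrt A / \<rho>) powr (2 * p / (p - 1))
      = (p - 1) / p * (P powr (- 1 / (p - 1)) * P powr (p / (p - 1))) * \<rho> powr p"
    unfolding Cp_def P_def[symmetric] X by (simp only: mult_ac)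
  also have "\<dots> = (p - 1) / p * (A / \<rho>)"
  proof -
    have "A / \<rho> = P * \<rho> powr p"
      using assms by (simp add: P_def powr_add)
    then show ?thesis
      unfolding P_powr by simp
  qed
  finally show ?thesis
    by simp
qed

lemma U_set_margin:
  assumes \<delta>: "\<And>w. w \<in> Hs s \<Longrightarrow> Lp_norm (p + 1) w = 1 \<Longrightarrow>
      \<delta> < Cp * Hs_norm s w powr (2 * p / (p - 1)) - f w"
    and u: "u \<in> U_set s p a"
  shows "\<delta> * Lp_norm (p + 1) u < (p - 1) / p * Hs_norm_sq s u - f u"
proof -
  define A where "A = Hs_norm_sq s u"
  define \<rho> where "\<rho> = Lp_norm (p + 1) u"
  define w where "w = (\<lambda>x. (1 / \<rho>) * u x)"
  have \<rho>: "0 < \<rho>"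
    unfolding \<rho>_def by (rule U_set_D(3)[OF u])
  have "w \<in> Hs s"
    unfolding w_def by (rule Hs_cmult[OF U_set_D(1)[OF u]])
  moreover have "Lp_norm (p + 1) w = 1"
    using \<rho> p_gt_1 Lp_norm_cmult[of "p + 1" "1 / \<rho>" u] by (simp add: w_def \<rho>_def[symmetric])
  ultimately have "\<delta> < Cp * Hs_norm s w powr (2 * p / (p - 1)) - f w"
    by (rule \<delta>)
  moreover have "Hs_norm s w = sqrt A / \<rho>"
    using \<rho> Hs_norm_sq_cmult[OF U_set_D(1)[OF u], of "1 / \<rho>"]
    by (simp add: w_def A_def Hs_norm_def real_sqrt_mult real_sqrt_divide)
  moreover have "f w = f u / \<rho>"
    using dual_Hs_cmult[OF f_dual U_set_D(1)[OF u], of "1 / \<rho>"] by (simp add: w_def)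
  moreover have "Cp * (sqrt A / \<rho>) powr (2 * p / (p - 1)) = (p - 1) / p * A / \<rho>"
    using Cp_rescaled_norm[OF \<rho>] U_set_D(4)[OF u] by (simp add: A_def \<rho>_def)
  ultimately have "\<delta> < ((p - 1) / p * A - f u) / \<rho>"
    by (simp add: diff_divide_distrib)
  then show ?thesis
    using \<rho> by (simp add: A_def \<rho>_def[symmetric] less_divide_eq)
qed

lemma U_set_energy_coercive:
  assumes "u \<in> U_set s p a"
  shows "coercivity * Hs_norm_sq s u - K * sqrt (Hs_norm_sq s u) \<le> I_af s p a f u"
  using fibering_map_coercive[OF p_gt_1 _ nonlinear_term_nonneg U_set_D(5)[OF assms]]
    f_bounded[OF U_set_D(1)[OF assms]] Hs_norm_sq_nonneg[of s u]
  by (simp add: I_af_eq_fibering_map[OF U_set_D(1)[OF assms]] coercivity_def Hs_norm_def)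

lemma U_set_energy_bounded_below:
  assumes "u \<in> U_set s p a"
  shows "- (K\<^sup>2 / (4 * coercivity)) \<le> I_af s p a f u"
  using quadratic_ge_neg_discriminant[OF coercivity_pos, of K "sqrt (Hs_norm_sq s u)"]
    U_set_energy_coercive[OF assms] Hs_norm_sq_nonneg[of s u]
  by simp

lemma U_set_negative_energy_bounded:
  assumes "u \<in> U_set s p a" "I_af s p a f u < 0"
  shows "Hs_norm_sq s u \<le> (K / coercivity)\<^sup>2"
proof -
  define r where "r = sqrt (Hs_norm_sq s u)"
  have r: "0 < r" "r\<^sup>2 = Hs_norm_sq s u"
    using U_set_D(2)[OF assms(1)] by (auto simp: r_def)
  have "coercivity * Hs_norm_sq s u - K * r < 0"
    using U_set_energy_coercive[OF assms(1)] assms(2) unfolding r_def by linarith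
  then have "(coercivity * r - K) * r < 0"
    unfolding r(2)[symmetric] by (simp add: power2_eq_square algebra_simps)
  then have "coercivity * r < K"
    using r(1) by (simp add: mult_less_0_iff)
  then have "r \<le> K / coercivity"
    using coercivity_pos by (simp add: pos_le_divide_eq mult.commute)
  then show ?thesis
    using r by (metis power_mono less_imp_le)
qed

lemma U_set_energy_gap:
  assumes "0 \<le> \<delta>"
    and \<delta>: "\<And>w. w \<in> Hs s \<Longrightarrow> Lp_norm (p + 1) w = 1 \<Longrightarrow>
      \<delta> < Cp * Hs_norm s w powr (2 * p / (p - 1)) - f w"
    and u: "u \<in> U_set s p a" and neg: "I_af s p a f u < 0"
  shows "\<exists>v\<in>U1_set s p a.
    I_af s p a f v + \<delta>\<^sup>2 / (2 * max (p * Linf_norm a) ((K / coercivity)\<^sup>2)) \<le> I_af s p a f u"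
proof -
  note fibering = I_af_eq_fibering_map[OF U_set_D(1)[OF u]]
  obtain h where h: "0 < h" "h < 1"
    and gap: "fibering_map p (Hs_norm_sq s u) (nonlinear_term u) (f u) (1 - h)
      + \<delta>\<^sup>2 / (2 * max (p * Linf_norm a) ((K / coercivity)\<^sup>2))
      \<le> fibering_map p (Hs_norm_sq s u) (nonlinear_term u) (f u) 1"
    using fibering_map_gap[OF p_gt_1 L_pos U_set_D(3,4)[OF u] nonlinear_term_nonneg
        U_set_D(5)[OF u] assms(1) U_set_margin[OF \<delta> u] U_set_negative_energy_bounded[OF u neg]]
      neg fibering by auto
  have "(\<lambda>x. (1 - h) * u x) \<in> U1_set s p a"
    using U_set_cmult_mem_U1_set[OF u] h by simp
  moreover have "I_af s p a f (\<lambda>x. (1 - h) * u x)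
      = fibering_map p (Hs_norm_sq s u) (nonlinear_term u) (f u) (1 - h)"
    using I_af_cmult[OF U_set_D(1)[OF u]] h by simp
  ultimately show ?thesis
    using gap fibering by (intro bexI[of _ "\<lambda>x. (1 - h) * u x"]) auto
qed


lemma U_set_uniform_gap:
  assumes "\<exists>u\<in>Hs s. f u \<noteq> 0" and "0 < \<delta>"
    and \<delta>: "\<And>w. w \<in> Hs s \<Longrightarrow> Lp_norm (p + 1) w = 1 \<Longrightarrow>
      \<delta> < Cp * Hs_norm s w powr (2 * p / (p - 1)) - f w"
  shows "\<exists>m>0. \<forall>u\<in>U_set s p a. \<exists>v\<in>U1_set s p a. I_af s p a f v + m \<le> I_af s p a f u"
proof -
  obtain v\<^sub>0 where v\<^sub>0: "v\<^sub>0 \<in> U1_set s p a" "I_af s p a f v\<^sub>0 < 0"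
    using exists_U1_set_negative_energy[OF assms(1)] by blast
  define \<gamma> where "\<gamma> = \<delta>\<^sup>2 / (2 * max (p * Linf_norm a) ((K / coercivity)\<^sup>2))"
  have "0 < \<gamma>"
    using \<open>0 < \<delta>\<close> p_gt_1 L_pos by (simp add: \<gamma>_def less_max_iff_disj)
  have "\<exists>v\<in>U1_set s p a. I_af s p a f v + min (- I_af s p a f v\<^sub>0) \<gamma> \<le> I_af s p a f u"
    if u: "u \<in> U_set s p a" for u
  proof (cases "I_af s p a f u < 0")
    case True
    then obtain v where "v \<in> U1_set s p a" "I_af s p a f v + \<gamma> \<le> I_af s p a f u"
      using U_set_energy_gap[OF less_imp_le[OF \<open>0 < \<delta>\<close>] \<delta> u True] unfolding \<gamma>_def by blast
    then show ?thesis
      by (intro bexI[of _ v]) auto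
  next
    case False
    then show ?thesis
      using v\<^sub>0 by (intro bexI[of _ v\<^sub>0]) auto
  qed
  then show ?thesis
    using v\<^sub>0(2) \<open>0 < \<gamma>\<close> by (intro exI[of _ "min (- I_af s p a f v\<^sub>0) \<gamma>"]) auto
qed

end

theorem lemma3p2:
  fixes s p :: real and a :: "'a::euclidean_space \<Rightarrow> real"
    and f :: "('a \<Rightarrow> real) \<Rightarrow> real"
  assumes "0 < s" "s < 1"
    and "real DIM('a) > 2 * s"
    and "1 < p" "p < (real DIM('a) + 2 * s) / (real DIM('a) - 2 * s)"
    and "a \<in> borel_measurable lborel" "\<exists>C. AE x in lborel. \<bar>a x\<bar> \<le> C"
    and "AE x in lborel. a x > 0"
    and "dual_Hs s f" "nonneg_functional s f" "\<exists>u\<in>Hs s. f u \<noteq> 0"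
    and "(INF u\<in>{u\<in>Hs s. Lp_norm (p + 1) u = 1}.
           ereal ((p * Linf_norm a) powr (- 1 / (p - 1)) * ((p - 1) / p)
                  * Hs_norm s u powr (2 * p / (p - 1)) - f u)) > 0"
  shows "(INF u\<in>U1_set s p a. ereal (I_af s p a f u)) < (INF u\<in>U_set s p a. ereal (I_af s p a f u))"
proof -
  have "\<exists>K. \<forall>u\<in>Hs s. \<bar>f u\<bar> \<le> K * Hs_norm s u"
    using assms(9) unfolding dual_Hs_def by (rule conjunct2[THEN conjunct2])
  then obtain K where K: "\<forall>u\<in>Hs s. \<bar>f u\<bar> \<le> K * Hs_norm s u"
    by blast
  interpret fractional_problem s p a f K
    using assms(4,6-9) K by unfold_locales auto
  obtain \<delta> where "0 < \<delta>"
    and "\<forall>w\<in>{u\<in>Hs s. Lp_norm (p + 1) u = 1}.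
      \<delta> < (p * Linf_norm a) powr (- 1 / (p - 1)) * ((p - 1) / p)
            * Hs_norm s w powr (2 * p / (p - 1)) - f w"
    using INF_ereal_pos_imp_uniform[OF assms(12)] by blast
  then have \<delta>: "\<And>w. w \<in> Hs s \<Longrightarrow> Lp_norm (p + 1) w = 1 \<Longrightarrow>
      \<delta> < Cp * Hs_norm s w powr (2 * p / (p - 1)) - f w"
    unfolding Cp_def by simp
  obtain m where "0 < m"
    and gap: "\<forall>u\<in>U_set s p a. \<exists>v\<in>U1_set s p a. I_af s p a f v + m \<le> I_af s p a f u"
    using U_set_uniform_gap[OF assms(11) \<open>0 < \<delta>\<close> \<delta>] by blast
  have "U1_set s p a \<noteq> {}"
    using exists_U1_set_negative_energy[OF assms(11)] by blast
  then show ?thesis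
    using \<open>0 < m\<close> U_set_energy_bounded_below gap[rule_format] by (rule INF_less_INF_if_uniform_gap)
qed

end
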